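(* For every integer $g \ge 0$, let $n'_g$ denote the number of gapsets of genus $g$ and depth at most $3$ (equivalently, the number of numerical semigroups $S$ of genus $g$ whose conductor $c$ and multiplicity $m$ satisfy $c \le 3m$). Then for all $g \ge 3$, $$n'_{g-1}+n'_{g-2} \,\le\, n'_{g} \,\le\, n'_{g-1}+n'_{g-2}+n'_{g-3}.$$
   Context: A gapset is a finite set $G \subset \mathbb{N}_+=\{1,2,3,\dots\}$ such that for all $z \in G$, whenever $z=x+y$ with $x,y\in\mathbb{N}_+$, we have $x\in G$ or $y\in G$; equivalently $G=\mathbb{N}\setminus S$ for a numerical semigroup $S$. The multiplicity of $G$ is the least $m\ge 1$ with $m\notin G$; its Frobenius number is $f=\max G$ (and $f=-1$ if $G=\emptyset$); its conductor is $c=f+1$; its genus is $|G|$; its depth is $q=\lceil c/m\rceil$. *)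

theory Defs
  imports Complex_Main
begin

definition gapset :: "nat set \<Rightarrow> bool" where
  "gapset G \<longleftrightarrow> finite G \<and> 0 \<notin> G \<and>
     (\<forall>z\<in>G. \<forall>x y. 0 < x \<and> 0 < y \<and> z = x + y \<longrightarrow> x \<in> G \<or> y \<in> G)"

definition multiplicity_gs :: "nat set \<Rightarrow> nat" where
  "multiplicity_gs G = (LEAST m. 1 \<le> m \<and> m \<notin> G)"

(* conductor c = f + 1, with f = max G, and f = -1 (so c = 0) for G empty *)
definition conductor_gs :: "nat set \<Rightarrow> nat" where
  "conductor_gs G = (if G = {} then 0 else Max G + 1)"

definition depth_gs :: "nat set \<Rightarrow> nat" where
  "depth_gs G = nat \<lceil>real (conductor_gs G) / real (multiplicity_gs G)\<rceil>"

definition n_depth3 :: "nat \<Rightarrow> nat" where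
  "n_depth3 g = card {G. gapset G \<and> card G = g \<and> depth_gs G \<le> 3}"

end

theory Submission
  imports Defs
begin

text \<open>A gapset \<open>G\<close> of multiplicity \<open>m\<close> and depth at most 3 contains \<open>[1, m)\<close>, avoids \<open>m\<close>
  and \<open>2m\<close> and lies below \<open>3m\<close>, so it is determined by its layers
  \<open>A = {a. m + a \<in> G}\<close> and \<open>B = {b. 2m + b \<in> G}\<close>, subsets of \<open>[1, m)\<close>. With \<open>N = m - 1\<close>,
  the triples \<open>(N, A, B)\<close> arising this way are exactly those with \<open>B \<subseteq> A\<close> and
  \<open>x + y \<notin> B\<close> for all \<open>x, y \<in> [1, N] - A\<close>, and the genus is \<open>N + |A| + |B|\<close>.
  Deleting \<open>N\<close> from all three layers lowers the genus by 1, 2 or 3 according as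
  \<open>N \<notin> A\<close>, \<open>N \<in> A - B\<close> or \<open>N \<in> B\<close>; it is a bijection onto all triples of the smaller
  genus in the first two cases and injective in the third.\<close>

definition layered :: "nat \<Rightarrow> nat set \<Rightarrow> nat set \<Rightarrow> nat set" where
  "layered N A B = {1..N} \<union> (+) (Suc N) ` A \<union> (+) (2 * Suc N) ` B"

definition admissible :: "nat \<Rightarrow> nat set \<Rightarrow> nat set \<Rightarrow> bool" where
  "admissible N A B \<longleftrightarrow> A \<subseteq> {1..N} \<and> B \<subseteq> A \<and>
     (\<forall>x\<in>{1..N} - A. \<forall>y\<in>{1..N} - A. x + y \<notin> B)"

definition layers :: "nat \<Rightarrow> nat set \<Rightarrow> nat \<times> nat set \<times> nat set" where
  "layers m G = (m - 1, {a \<in> {1..<m}. m + a \<in> G}, {b \<in> {1..<m}. 2 * m + b \<in> G})"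

lemma admissibleD:
  assumes "admissible N A B"
  shows "A \<subseteq> {1..N}" "B \<subseteq> A" "finite A" "finite B"
    "\<And>x y. x \<in> {1..N} - A \<Longrightarrow> y \<in> {1..N} - A \<Longrightarrow> x + y \<notin> B"
  using assms finite_subset[of A "{1..N}"] finite_subset[of B A]
  unfolding admissible_def by auto

lemma layered_bounds:
  assumes "admissible N A B" "x \<in> layered N A B"
  shows "1 \<le> x" "x < 3 * Suc N"
  using assms admissibleD(1,2)[OF assms(1)] unfolding layered_def by fastforce+

lemma Suc_not_in_layered:
  assumes "admissible N A B"
  shows "Suc N \<notin> layered N A B"
  using admissibleD(1,2)[OF assms] unfolding layered_def by fastforce

lemma first_layer_in_layered: "1 \<le> x \<Longrightarrow> x \<le> N \<Longrightarrow> x \<in> layered N A B"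
  unfolding layered_def by simp

lemma second_layer_in_layered_iff:
  assumes "admissible N A B" "a \<le> N"
  shows "Suc N + a \<in> layered N A B \<longleftrightarrow> a \<in> A"
  using assms admissibleD(1,2)[OF assms(1)] unfolding layered_def by fastforce

lemma third_layer_in_layered_iff:
  assumes "admissible N A B"
  shows "2 * Suc N + b \<in> layered N A B \<longleftrightarrow> b \<in> B"
  using admissibleD(1,2)[OF assms] unfolding layered_def by fastforce

lemma gapset_layered:
  assumes adm: "admissible N A B"
  shows "gapset (layered N A B)"
  unfolding gapset_def
proof (intro conjI ballI allI impI)
  show "finite (layered N A B)"
    using layered_bounds(2)[OF adm] by (meson finite_lessThan finite_subset lessThan_iff subsetI)
  show "0 \<notin> layered N A B"
    using layered_bounds(1)[OF adm] by fastforce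
  fix z x y
  assume z: "z \<in> layered N A B" and xyz: "0 < x \<and> 0 < y \<and> z = x + y"
  show "x \<in> layered N A B \<or> y \<in> layered N A B"
  proof (rule ccontr)
    assume "\<not> ?thesis"
    then have x: "x \<notin> layered N A B" and y: "y \<notin> layered N A B" by auto
    have "N < x" "N < y"
      using xyz x y first_layer_in_layered[of _ N A B] by (auto simp flip: not_less)
    then obtain x' y' where x': "x = Suc N + x'" and y': "y = Suc N + y'"
      using less_imp_Suc_add by blast
    have "z \<notin> (+) (Suc N) ` A"
      using admissibleD(1)[OF adm] xyz x' y' by auto
    then obtain b where b: "b \<in> B" "z = 2 * Suc N + b"
      using z xyz x' y' unfolding layered_def by auto
    then have sum: "x' + y' = b" using xyz x' y' by simp
    have "b \<in> A" "b \<le> N" using b admissibleD(1,2)[OF adm] by auto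
    then have "x' \<notin> A" "y' \<notin> A"
      using x y x' y' sum second_layer_in_layered_iff[OF adm] by auto
    moreover have "x' \<noteq> 0" "y' \<noteq> 0"
      using \<open>b \<in> A\<close> sum \<open>x' \<notin> A\<close> \<open>y' \<notin> A\<close> by (metis add_0, metis add_0_right)
    ultimately have "x' + y' \<notin> B"
      using sum \<open>b \<le> N\<close> by (intro admissibleD(5)[OF adm]) auto
    then show False using sum b by simp
  qed
qed

lemma card_layered:
  assumes adm: "admissible N A B"
  shows "card (layered N A B) = N + card A + card B"
proof -
  note A = admissibleD(1,2,3,4)[OF adm]
  have "card ((+) (Suc N) ` A) = card A" "card ((+) (2 * Suc N) ` B) = card B"
    by (rule card_image, simp)+
  moreover have "{1..N} \<inter> (+) (Suc N) ` A = {}"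
    "({1..N} \<union> (+) (Suc N) ` A) \<inter> (+) (2 * Suc N) ` B = {}"
    using A(1) by auto
  ultimately show ?thesis
    unfolding layered_def using A by (simp add: card_Un_disjoint)
qed

lemma multiplicity_gs_layered:
  assumes "admissible N A B"
  shows "multiplicity_gs (layered N A B) = Suc N"
  unfolding multiplicity_gs_def
proof (rule Least_equality)
  show "1 \<le> Suc N \<and> Suc N \<notin> layered N A B"
    using Suc_not_in_layered[OF assms] by simp
  show "\<And>y. 1 \<le> y \<and> y \<notin> layered N A B \<Longrightarrow> Suc N \<le> y"
    using first_layer_in_layered not_less_eq_eq by blast
qed

lemma layers_layered:
  assumes adm: "admissible N A B"
  shows "layers (multiplicity_gs (layered N A B)) (layered N A B) = (N, A, B)"
proof -
  have "{a \<in> {1..<Suc N}. Suc N + a \<in> layered N A B} = A"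
    using admissibleD(1)[OF adm] second_layer_in_layered_iff[OF adm] by auto
  moreover have "{b \<in> {1..<Suc N}. 2 * Suc N + b \<in> layered N A B} = B"
    using admissibleD(1,2)[OF adm] third_layer_in_layered_iff[OF adm] by auto
  ultimately show ?thesis
    unfolding multiplicity_gs_layered[OF adm] layers_def by simp
qed

lemma gapset_add_notin:
  assumes "gapset G" "x \<notin> G" "y \<notin> G"
  shows "x + y \<notin> G"
  using assms unfolding gapset_def by (metis bot_nat_0.not_eq_extremum plus_nat.add_0 add_0_right)

lemma multiplicity_gs_notin:
  assumes "finite G"
  shows "1 \<le> multiplicity_gs G" "multiplicity_gs G \<notin> G"
proof -
  obtain k where "\<forall>x\<in>G. x < k"
    using assms finite_nat_set_iff_bounded by blast
  then have "1 \<le> Suc k \<and> Suc k \<notin> G" by auto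
  then have "1 \<le> multiplicity_gs G \<and> multiplicity_gs G \<notin> G"
    unfolding multiplicity_gs_def by (rule LeastI)
  then show "1 \<le> multiplicity_gs G" "multiplicity_gs G \<notin> G" by auto
qed

lemma less_multiplicity_gs_in: "1 \<le> j \<Longrightarrow> j < multiplicity_gs G \<Longrightarrow> j \<in> G"
  unfolding multiplicity_gs_def using not_less_Least by blast

lemma depth_gs_le_iff:
  assumes "finite G"
  shows "depth_gs G \<le> q \<longleftrightarrow> (\<forall>x\<in>G. x < q * multiplicity_gs G)"
proof -
  define m where "m = multiplicity_gs G"
  have "1 \<le> m" using multiplicity_gs_notin(1)[OF assms] by (simp add: m_def)
  have "depth_gs G \<le> q \<longleftrightarrow> real (conductor_gs G) / real m \<le> q"
    unfolding depth_gs_def m_def by (simp add: ceiling_le_iff nat_le_iff)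
  also have "\<dots> \<longleftrightarrow> conductor_gs G \<le> q * m"
    using \<open>1 \<le> m\<close> by (simp add: pos_divide_le_eq flip: of_nat_mult)
  also have "\<dots> \<longleftrightarrow> (\<forall>x\<in>G. x < q * m)"
    using assms unfolding conductor_gs_def by (auto simp: Suc_le_eq)
  finally show ?thesis by (simp add: m_def)
qed

lemma layered_depth_gs_le_3:
  assumes "admissible N A B"
  shows "depth_gs (layered N A B) \<le> 3"
proof -
  have "finite (layered N A B)"
    using gapset_layered[OF assms] unfolding gapset_def by blast
  then show ?thesis
    using layered_bounds(2)[OF assms]
    by (simp add: depth_gs_le_iff multiplicity_gs_layered[OF assms])
qed

lemma admissible_layers:
  assumes G: "gapset G" and "m \<notin> G" and layers: "layers m G = (N, A, B)"
  shows "admissible N A B"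
  unfolding admissible_def
proof (intro conjI ballI)
  have N: "N = m - 1" and A: "A = {a \<in> {1..<m}. m + a \<in> G}"
    and B: "B = {b \<in> {1..<m}. 2 * m + b \<in> G}"
    using layers unfolding layers_def by auto
  show "A \<subseteq> {1..N}" using A N by auto
  show "B \<subseteq> A"
  proof
    fix b assume "b \<in> B"
    moreover have "2 * m + b = m + (m + b)" by simp
    ultimately show "b \<in> A"
      using gapset_add_notin[OF G \<open>m \<notin> G\<close>, of "m + b"] A B by auto
  qed
  fix x y assume "x \<in> {1..N} - A" "y \<in> {1..N} - A"
  then have "(m + x) + (m + y) \<notin> G"
    using A N gapset_add_notin[OF G] by auto
  moreover have "(m + x) + (m + y) = 2 * m + (x + y)" by simp
  ultimately have "2 * m + (x + y) \<notin> G" by metis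
  then show "x + y \<notin> B" using B by simp
qed

lemma layered_layers:
  assumes G: "gapset G" and "depth_gs G \<le> 3"
    and layers: "layers (multiplicity_gs G) G = (N, A, B)"
  shows "layered N A B = G"
proof -
  define m where "m = multiplicity_gs G"
  have fin: "finite G" and "0 \<notin> G" using G unfolding gapset_def by auto
  have "1 \<le> m" "m \<notin> G" using multiplicity_gs_notin[OF fin] by (simp_all add: m_def)
  have "2 * m \<notin> G" using gapset_add_notin[OF G \<open>m \<notin> G\<close> \<open>m \<notin> G\<close>] by (simp add: mult_2)
  have below_3m: "x < 3 * m" if "x \<in> G" for x
    using \<open>depth_gs G \<le> 3\<close> that depth_gs_le_iff[OF fin] by (simp add: m_def)
  have m: "m = Suc N" and A: "A = {a \<in> {1..<m}. m + a \<in> G}"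
    and B: "B = {b \<in> {1..<m}. 2 * m + b \<in> G}"
    using layers \<open>1 \<le> m\<close> unfolding layers_def m_def by auto
  show ?thesis
  proof (intro set_eqI iffI)
    fix x assume "x \<in> layered N A B"
    then show "x \<in> G"
      unfolding layered_def using A B m less_multiplicity_gs_in[of x G] by (auto simp: m_def)
  next
    fix x assume x: "x \<in> G"
    have "1 \<le> x" using x \<open>0 \<notin> G\<close> by (cases x) auto
    have "x \<noteq> m" "x \<noteq> 2 * m" "x < 3 * m"
      using x \<open>m \<notin> G\<close> \<open>2 * m \<notin> G\<close> below_3m by auto
    consider "x < m" | "m < x" "x < 2 * m" | "2 * m < x"
      using \<open>x \<noteq> m\<close> \<open>x \<noteq> 2 * m\<close> by linarith
    then show "x \<in> layered N A B"
    proof cases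
      case 1
      then show ?thesis using \<open>1 \<le> x\<close> m unfolding layered_def by auto
    next
      case 2
      then have "x - m \<in> A" using A x by auto
      moreover have "x = Suc N + (x - m)" using 2 m by simp
      ultimately show ?thesis unfolding layered_def by blast
    next
      case 3
      then have "x - 2 * m \<in> B" using B x \<open>x < 3 * m\<close> by auto
      moreover have "x = 2 * Suc N + (x - 2 * m)" using 3 m by simp
      ultimately show ?thesis unfolding layered_def by blast
    qed
  qed
qed

definition layer_triples :: "nat \<Rightarrow> (nat \<times> nat set \<times> nat set) set" where
  "layer_triples g = {(N, A, B). admissible N A B \<and> N + card A + card B = g}"

lemma mem_layer_triples:
  "(N, A, B) \<in> layer_triples g \<longleftrightarrow> admissible N A B \<and> N + card A + card B = g"
  unfolding layer_triples_def by simp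

lemma layer_triplesD:
  assumes "(N, A, B) \<in> layer_triples g"
  shows "admissible N A B" "N + card A + card B = g" "A \<subseteq> {1..N}" "B \<subseteq> A"
proof -
  show adm: "admissible N A B" and "N + card A + card B = g"
    using assms unfolding mem_layer_triples by auto
  show "A \<subseteq> {1..N}" "B \<subseteq> A" using admissibleD(1,2)[OF adm] by auto
qed

lemma bij_betw_layered_layer_triples:
  "bij_betw (\<lambda>(N, A, B). layered N A B) (layer_triples g)
     {G. gapset G \<and> card G = g \<and> depth_gs G \<le> 3}"
proof (rule bij_betw_byWitness[where f' = "\<lambda>G. layers (multiplicity_gs G) G"])
  show "\<forall>t\<in>layer_triples g. layers (multiplicity_gs (case t of (N, A, B) \<Rightarrow> layered N A B))
      (case t of (N, A, B) \<Rightarrow> layered N A B) = t"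
    unfolding layer_triples_def using layers_layered by auto
  show "(\<lambda>(N, A, B). layered N A B) ` layer_triples g
      \<subseteq> {G. gapset G \<and> card G = g \<and> depth_gs G \<le> 3}"
    unfolding layer_triples_def
    using gapset_layered card_layered layered_depth_gs_le_3 by auto
  have "layers (multiplicity_gs G) G \<in> layer_triples g \<and>
      (case layers (multiplicity_gs G) G of (N, A, B) \<Rightarrow> layered N A B) = G"
    if "G \<in> {G. gapset G \<and> card G = g \<and> depth_gs G \<le> 3}" for G
  proof -
    have G: "gapset G" "card G = g" "depth_gs G \<le> 3" using that by auto
    obtain N A B where layers: "layers (multiplicity_gs G) G = (N, A, B)"
      by (metis prod_cases3)
    have "admissible N A B"
      using admissible_layers[OF G(1) _ layers] multiplicity_gs_notin G(1)
      unfolding gapset_def by blast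
    moreover have "layered N A B = G" using layered_layers[OF G(1,3) layers] .
    ultimately show ?thesis
      using card_layered G(2) layers unfolding layer_triples_def by auto
  qed
  then show "\<forall>G\<in>{G. gapset G \<and> card G = g \<and> depth_gs G \<le> 3}.
      (case layers (multiplicity_gs G) G of (N, A, B) \<Rightarrow> layered N A B) = G"
    "(\<lambda>G. layers (multiplicity_gs G) G) ` {G. gapset G \<and> card G = g \<and> depth_gs G \<le> 3}
      \<subseteq> layer_triples g"
    by auto
qed

lemma n_depth3_eq_card_layer_triples: "n_depth3 g = card (layer_triples g)"
  unfolding n_depth3_def using bij_betw_same_card[OF bij_betw_layered_layer_triples] by simp

fun drop_top :: "nat \<times> nat set \<times> nat set \<Rightarrow> nat \<times> nat set \<times> nat set" where
  "drop_top (N, A, B) = (N - 1, A - {N}, B - {N})"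

lemma admissible_drop_top:
  assumes "admissible N A B"
  shows "admissible (N - 1) (A - {N}) (B - {N})"
  unfolding admissible_def
proof (intro conjI ballI)
  show "A - {N} \<subseteq> {1..N - 1}" "B - {N} \<subseteq> A - {N}"
    using admissibleD(1,2)[OF assms] by auto
  fix x y assume "x \<in> {1..N - 1} - (A - {N})" "y \<in> {1..N - 1} - (A - {N})"
  then have "x \<in> {1..N} - A" "y \<in> {1..N} - A" by auto
  then show "x + y \<notin> B - {N}" using admissibleD(5)[OF assms] by blast
qed

lemma admissible_Suc:
  assumes "admissible N A B"
  shows "admissible (Suc N) A B"
  unfolding admissible_def
proof (intro conjI ballI)
  show "A \<subseteq> {1..Suc N}" "B \<subseteq> A" using admissibleD(1,2)[OF assms] by auto
  fix x y assume "x \<in> {1..Suc N} - A" "y \<in> {1..Suc N} - A"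
  moreover have "b \<le> N" if "b \<in> B" for b using admissibleD(1,2)[OF assms] that by auto
  ultimately show "x + y \<notin> B"
    using admissibleD(5)[OF assms] by (fastforce simp: le_Suc_eq)
qed

lemma admissible_Suc_insert:
  assumes "admissible N A B"
  shows "admissible (Suc N) (insert (Suc N) A) B"
  unfolding admissible_def
proof (intro conjI ballI)
  show "insert (Suc N) A \<subseteq> {1..Suc N}" "B \<subseteq> insert (Suc N) A"
    using admissibleD(1,2)[OF assms] by auto
  fix x y assume "x \<in> {1..Suc N} - insert (Suc N) A" "y \<in> {1..Suc N} - insert (Suc N) A"
  then have "x \<in> {1..N} - A" "y \<in> {1..N} - A" by auto
  then show "x + y \<notin> B" using admissibleD(5)[OF assms] by blast
qed

lemma finite_layer_triples: "finite (layer_triples g)"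
proof (rule finite_subset)
  show "layer_triples g \<subseteq> {..g} \<times> Pow {1..g} \<times> Pow {1..g}"
    unfolding layer_triples_def admissible_def by fastforce
qed simp

lemma layer_triples_top_pos:
  assumes "(N, A, B) \<in> layer_triples g" "0 < g"
  shows "0 < N"
  using assms unfolding mem_layer_triples admissible_def by (cases N) auto

lemma Suc_mem_layer_triples:
  assumes "(N, A, B) \<in> layer_triples g"
  shows "(Suc N, A, B) \<in> layer_triples (Suc g)" "Suc N \<notin> A" "Suc N \<notin> B"
  using admissible_Suc[OF layer_triplesD(1)[OF assms]] layer_triplesD(2-4)[OF assms]
  by (auto simp: mem_layer_triples)

lemma Suc_insert_mem_layer_triples:
  assumes "(N, A, B) \<in> layer_triples g"
  shows "(Suc N, insert (Suc N) A, B) \<in> layer_triples (Suc (Suc g))"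
proof -
  note adm = layer_triplesD(1)[OF assms]
  have "Suc N \<notin> A" "finite A" using admissibleD(1,3)[OF adm] by auto
  then show ?thesis
    using admissible_Suc_insert[OF adm] layer_triplesD(2)[OF assms] by (simp add: mem_layer_triples)
qed

lemma drop_top_mem_layer_triples:
  assumes "(N, A, B) \<in> layer_triples g" "0 < N"
  shows "drop_top (N, A, B) \<in> layer_triples (g - 1 - card (A \<inter> {N}) - card (B \<inter> {N}))"
proof -
  note adm = layer_triplesD(1)[OF assms(1)] and g = layer_triplesD(2)[OF assms(1)]
  have "card (A - {N}) = card A - card (A \<inter> {N})" "card (B - {N}) = card B - card (B \<inter> {N})"
    using admissibleD(3,4)[OF adm] by (simp_all add: card_Diff_subset_Int)
  moreover have "card (A \<inter> {N}) \<le> card A" "card (B \<inter> {N}) \<le> card B"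
    using admissibleD(3,4)[OF adm] by (simp_all add: card_mono)
  ultimately show ?thesis
    using admissible_drop_top[OF adm] assms(2) g[symmetric] by (simp add: mem_layer_triples)
qed

lemma bij_betw_Suc_layer_triples:
  assumes "0 < g"
  shows "bij_betw (\<lambda>(N, A, B). (Suc N, A, B)) (layer_triples (g - 1))
    {(N, A, B) \<in> layer_triples g. N \<notin> A}"
proof (rule bij_betw_byWitness[where f' = drop_top])
  show "\<forall>t\<in>layer_triples (g - 1). drop_top (case t of (N, A, B) \<Rightarrow> (Suc N, A, B)) = t"
    using Suc_mem_layer_triples(2,3) by auto
  show "(\<lambda>(N, A, B). (Suc N, A, B)) ` layer_triples (g - 1) \<subseteq> {(N, A, B) \<in> layer_triples g. N \<notin> A}"
    using Suc_mem_layer_triples(1,2)[of _ _ _ "g - 1"] assms by auto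
  have top: "0 < N" "A \<inter> {N} = {}" "B \<inter> {N} = {}"
    if "(N, A, B) \<in> layer_triples g" "N \<notin> A" for N A B
    using that layer_triples_top_pos[OF _ assms] layer_triplesD(4) by blast+
  then show "\<forall>t\<in>{(N, A, B) \<in> layer_triples g. N \<notin> A}.
      (case drop_top t of (N, A, B) \<Rightarrow> (Suc N, A, B)) = t"
    by auto
  show "drop_top ` {(N, A, B) \<in> layer_triples g. N \<notin> A} \<subseteq> layer_triples (g - 1)"
  proof (rule image_subsetI, clarify)
    fix N A B assume "(N, A, B) \<in> layer_triples g" "N \<notin> A"
    then show "drop_top (N, A, B) \<in> layer_triples (g - 1)"
      using drop_top_mem_layer_triples top by fastforce
  qed
qed

lemma bij_betw_Suc_insert_layer_triples:
  assumes "2 \<le> g"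
  shows "bij_betw (\<lambda>(N, A, B). (Suc N, insert (Suc N) A, B)) (layer_triples (g - 2))
    {(N, A, B) \<in> layer_triples g. N \<in> A - B}"
proof (rule bij_betw_byWitness[where f' = drop_top])
  show "\<forall>t\<in>layer_triples (g - 2).
      drop_top (case t of (N, A, B) \<Rightarrow> (Suc N, insert (Suc N) A, B)) = t"
    using Suc_mem_layer_triples(2,3) by auto
  show "(\<lambda>(N, A, B). (Suc N, insert (Suc N) A, B)) ` layer_triples (g - 2)
      \<subseteq> {(N, A, B) \<in> layer_triples g. N \<in> A - B}"
    using Suc_insert_mem_layer_triples[of _ _ _ "g - 2"] Suc_mem_layer_triples(3) assms
    by (auto simp: numeral_2_eq_2 Suc_diff_Suc)
  have top: "0 < N" "A \<inter> {N} = {N}" "B \<inter> {N} = {}" "insert N (A - {N}) = A"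
    if "(N, A, B) \<in> layer_triples g" "N \<in> A - B" for N A B
    using that layer_triplesD(3)[OF that(1)] by auto
  then show "\<forall>t\<in>{(N, A, B) \<in> layer_triples g. N \<in> A - B}.
      (case drop_top t of (N, A, B) \<Rightarrow> (Suc N, insert (Suc N) A, B)) = t"
    by auto
  show "drop_top ` {(N, A, B) \<in> layer_triples g. N \<in> A - B} \<subseteq> layer_triples (g - 2)"
  proof (rule image_subsetI, clarify)
    fix N A B assume "(N, A, B) \<in> layer_triples g" "N \<in> A" "N \<notin> B"
    then show "drop_top (N, A, B) \<in> layer_triples (g - 2)"
      using drop_top_mem_layer_triples top by (fastforce simp: numeral_2_eq_2)
  qed
qed

lemma card_top_in_B_le:
  "card {(N, A, B) \<in> layer_triples g. N \<in> B} \<le> card (layer_triples (g - 3))"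
proof (rule card_inj_on_le[OF _ _ finite_layer_triples])
  have top: "0 < N" "N \<in> A" "A \<inter> {N} = {N}" "B \<inter> {N} = {N}"
    if "(N, A, B) \<in> layer_triples g" "N \<in> B" for N A B
    using that layer_triplesD(3,4)[OF that(1)] by auto
  show "inj_on drop_top {(N, A, B) \<in> layer_triples g. N \<in> B}"
  proof (rule inj_onI, clarify)
    fix N A B N' A' B'
    assume "drop_top (N, A, B) = drop_top (N', A', B')"
      and t: "(N, A, B) \<in> layer_triples g" "N \<in> B" "(N', A', B') \<in> layer_triples g" "N' \<in> B'"
    then have "N - 1 = N' - 1" "A - {N} = A' - {N'}" "B - {N} = B' - {N'}" by simp_all
    moreover have "0 < N" "0 < N'" "N \<in> A" "N' \<in> A'" using top t by blast+
    ultimately have "N = N'" by simp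
    then show "N = N' \<and> (A, B) = (A', B')"
      using \<open>A - {N} = A' - {N'}\<close> \<open>B - {N} = B' - {N'}\<close> \<open>N \<in> A\<close> \<open>N' \<in> A'\<close> t(2,4)
      by (metis insert_Diff)
  qed
  show "drop_top ` {(N, A, B) \<in> layer_triples g. N \<in> B} \<subseteq> layer_triples (g - 3)"
  proof (rule image_subsetI, clarify)
    fix N A B assume "(N, A, B) \<in> layer_triples g" "N \<in> B"
    with top have "drop_top (N, A, B) \<in> layer_triples (g - 1 - 1 - 1)"
      using drop_top_mem_layer_triples by fastforce
    then show "drop_top (N, A, B) \<in> layer_triples (g - 3)" by (simp add: numeral_3_eq_3)
  qed
qed

lemma card_layer_triples_split:
  "card (layer_triples g) = card {(N, A, B) \<in> layer_triples g. N \<notin> A}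
    + card {(N, A, B) \<in> layer_triples g. N \<in> A - B} + card {(N, A, B) \<in> layer_triples g. N \<in> B}"
proof -
  let ?P1 = "{(N, A, B) \<in> layer_triples g. N \<notin> A}"
  let ?P2 = "{(N, A, B) \<in> layer_triples g. N \<in> A - B}"
  let ?P3 = "{(N, A, B) \<in> layer_triples g. N \<in> B}"
  have fin: "finite {(N, A, B) \<in> layer_triples g. P N A B}" for P
    using finite_layer_triples by (rule finite_subset[rotated]) auto
  have "layer_triples g = ?P1 \<union> ?P2 \<union> ?P3"
    by (auto dest: layer_triplesD(4))
  also have "card \<dots> = card (?P1 \<union> ?P2) + card ?P3"
    by (rule card_Un_disjoint) (use fin in \<open>auto dest: layer_triplesD(4)\<close>)
  also have "card (?P1 \<union> ?P2) = card ?P1 + card ?P2"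
    by (rule card_Un_disjoint) (use fin in auto)
  finally show ?thesis .
qed

theorem mainTheorem1:
  fixes g :: nat
  assumes "g \<ge> 3"
  shows "n_depth3 (g - 1) + n_depth3 (g - 2) \<le> n_depth3 g \<and>
         n_depth3 g \<le> n_depth3 (g - 1) + n_depth3 (g - 2) + n_depth3 (g - 3)"
proof -
  have "n_depth3 (g - 1) = card {(N, A, B) \<in> layer_triples g. N \<notin> A}"
    using bij_betw_same_card[OF bij_betw_Suc_layer_triples] assms
    by (simp add: n_depth3_eq_card_layer_triples)
  moreover have "n_depth3 (g - 2) = card {(N, A, B) \<in> layer_triples g. N \<in> A - B}"
    using bij_betw_same_card[OF bij_betw_Suc_insert_layer_triples] assms
    by (simp add: n_depth3_eq_card_layer_triples)
  moreover have "card {(N, A, B) \<in> layer_triples g. N \<in> B} \<le> n_depth3 (g - 3)"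
    using card_top_in_B_le by (simp add: n_depth3_eq_card_layer_triples)
  ultimately show ?thesis
    using card_layer_triples_split[of g] by (simp add: n_depth3_eq_card_layer_triples)
qed

end
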